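(* In the MDP fixed-point setting below with $\delta=1$, let $\mathcal{Z}_i=\{e^1,\dots,e^M\}$ (standard basis vectors of $\mathbb{R}^M$) for every $i$ and $k_i(z_i)=-C-\sum_j z_{ij}|i-j|$ with $C>0$. Then (H4) holds. Moreover, suppose there is a state $r$ with $1\in\mathcal{D}_r$ and $c_r(w_r)<-C$ for all $w_r\in\mathcal{W}_r$. Then, starting policy iteration from $v^0=0$, every admissible choice $P^1=(w^1,z^1,\psi^1)$ in the first step satisfies $z^1_r=e^r$ and $\psi^1_r=1$, row $r$ of $A(P^1)$ is identically zero, and hence $A(P^1)$ is singular (so $v^1$ is undefined).
   Context: MDP fixed-point setting: $\rho>0$; $\mathcal{P}=\prod_i(\mathcal{W}_i\times\mathcal{Z}_i\times\mathcal{D}_i)$ with $\mathcal{D}_i$ nonempty subsets of $\{0,1\}$ and $\mathcal{W}_i,\mathcal{Z}_i$ nonempty sets of probability vectors in $\mathbb{R}^M$; $c_i:\mathcal{W}_i\to\mathbb{R}$, $k_i:\mathcal{Z}_i\to\mathbb{R}$. For $P=(w,z,\psi)$: $[L(w)]_{ij}=w_{ij}/(1+\rho)$, $[B(z)]_{ij}=z_{ij}$, $[c(w)]_i=c_i(w_i)$, $[k(z)]_i=k_i(z_i)$, $\Psi=\operatorname{diag}(\psi)$, $A(P)=(I-\Psi)(I-L(w))+\delta\Psi(I-B(z))$, $b(P)=(I-\Psi)c(w)+\delta\Psi k(z)$. Order/suprema componentwise; $\mathbb{B}x=\sup_{z}\{B(z)x+k(z)\}$. Policy iteration: given $v^0$,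 for $\ell\ge1$ choose $P^\ell$ with $-A(P^\ell)v^{\ell-1}+b(P^\ell)=\sup_P\{-A(P)v^{\ell-1}+b(P)\}$ and solve $A(P^\ell)v^\ell=b(P^\ell)$. (H4): for each solution $v$ of $\sup_P\{-A(P)v+b(P)\}=0$ and each $i$ there exist integers $0\le n(i)<m(i)$ with $[\mathbb{B}^{m(i)}v]_i<[\mathbb{B}^{n(i)}v]_i$. *)

theory Defs
  imports Main "HOL-Library.Extended_Real" "Jordan_Normal_Form.Determinant"
begin

(* States are indexed 0..M-1 (the paper uses 1..M; the distances |i-j| are shift invariant).
   Vectors are nat => real, matrices nat => nat => real; only indices < M matter. *)

definition prob_vec :: "nat \<Rightarrow> (nat \<Rightarrow> real) \<Rightarrow> bool" where
  "prob_vec M p \<longleftrightarrow> (\<forall>j<M. 0 \<le> p j) \<and> (\<Sum>j<M. p j) = 1"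

definition basis_vec :: "nat \<Rightarrow> nat \<Rightarrow> real" where
  "basis_vec j = (\<lambda>l. if l = j then 1 else 0)"

type_synonym policy = "(nat \<Rightarrow> nat \<Rightarrow> real) \<times> (nat \<Rightarrow> nat \<Rightarrow> real) \<times> (nat \<Rightarrow> real)"

definition policies ::
  "nat \<Rightarrow> (nat \<Rightarrow> (nat \<Rightarrow> real) set) \<Rightarrow> (nat \<Rightarrow> (nat \<Rightarrow> real) set) \<Rightarrow> (nat \<Rightarrow> real set) \<Rightarrow> policy set" where
  "policies M W Z D = {(w, z, \<psi>). \<forall>i<M. w i \<in> W i \<and> z i \<in> Z i \<and> \<psi> i \<in> D i}"

definition Amat :: "real \<Rightarrow> real \<Rightarrow> policy \<Rightarrow> nat \<Rightarrow> nat \<Rightarrow> real" where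
  "Amat \<rho> \<delta> P i j = (case P of (w, z, \<psi>) \<Rightarrow>
     (1 - \<psi> i) * ((if i = j then 1 else 0) - w i j / (1 + \<rho>))
     + \<delta> * \<psi> i * ((if i = j then 1 else 0) - z i j))"

definition bvec :: "(nat \<Rightarrow> (nat \<Rightarrow> real) \<Rightarrow> real) \<Rightarrow> (nat \<Rightarrow> (nat \<Rightarrow> real) \<Rightarrow> real)
    \<Rightarrow> real \<Rightarrow> policy \<Rightarrow> nat \<Rightarrow> real" where
  "bvec c k \<delta> P i = (case P of (w, z, \<psi>) \<Rightarrow> (1 - \<psi> i) * c i (w i) + \<delta> * \<psi> i * k i (z i))"

definition Fval :: "nat \<Rightarrow> real \<Rightarrow> real \<Rightarrow> (nat \<Rightarrow> (nat \<Rightarrow> real) \<Rightarrow> real)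
    \<Rightarrow> (nat \<Rightarrow> (nat \<Rightarrow> real) \<Rightarrow> real) \<Rightarrow> policy \<Rightarrow> (nat \<Rightarrow> real) \<Rightarrow> nat \<Rightarrow> real" where
  "Fval M \<rho> \<delta> c k P v i = - (\<Sum>j<M. Amat \<rho> \<delta> P i j * v j) + bvec c k \<delta> P i"

definition Bop :: "nat \<Rightarrow> (nat \<Rightarrow> (nat \<Rightarrow> real) set) \<Rightarrow> (nat \<Rightarrow> (nat \<Rightarrow> real) \<Rightarrow> real)
    \<Rightarrow> (nat \<Rightarrow> real) \<Rightarrow> nat \<Rightarrow> real" where
  "Bop M Z k x i = (SUP zi\<in>Z i. (\<Sum>j<M. zi j * x j) + k i zi)"

definition H4 :: "nat \<Rightarrow> real \<Rightarrow> real \<Rightarrow> (nat \<Rightarrow> (nat \<Rightarrow> real) set) \<Rightarrow> (nat \<Rightarrow> (nat \<Rightarrow> real) set)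
    \<Rightarrow> (nat \<Rightarrow> real set) \<Rightarrow> (nat \<Rightarrow> (nat \<Rightarrow> real) \<Rightarrow> real) \<Rightarrow> (nat \<Rightarrow> (nat \<Rightarrow> real) \<Rightarrow> real) \<Rightarrow> bool" where
  "H4 M \<rho> \<delta> W Z D c k \<longleftrightarrow>
     (\<forall>v. (\<forall>i<M. (SUP P\<in>policies M W Z D. ereal (Fval M \<rho> \<delta> c k P v i)) = 0) \<longrightarrow>
        (\<forall>i<M. \<exists>n m. n < m \<and> (Bop M Z k ^^ m) v i < (Bop M Z k ^^ n) v i))"

definition pi_choice :: "nat \<Rightarrow> real \<Rightarrow> real \<Rightarrow> (nat \<Rightarrow> (nat \<Rightarrow> real) set) \<Rightarrow> (nat \<Rightarrow> (nat \<Rightarrow> real) set)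
    \<Rightarrow> (nat \<Rightarrow> real set) \<Rightarrow> (nat \<Rightarrow> (nat \<Rightarrow> real) \<Rightarrow> real) \<Rightarrow> (nat \<Rightarrow> (nat \<Rightarrow> real) \<Rightarrow> real)
    \<Rightarrow> (nat \<Rightarrow> real) \<Rightarrow> policy \<Rightarrow> bool" where
  "pi_choice M \<rho> \<delta> W Z D c k v P \<longleftrightarrow> P \<in> policies M W Z D \<and>
     (\<forall>P'\<in>policies M W Z D. \<forall>i<M. Fval M \<rho> \<delta> c k P' v i \<le> Fval M \<rho> \<delta> c k P v i)"

definition Amatrix :: "nat \<Rightarrow> real \<Rightarrow> real \<Rightarrow> policy \<Rightarrow> real mat" where
  "Amatrix M \<rho> \<delta> P = mat M M (\<lambda>(i, j). Amat \<rho> \<delta> P i j)"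

end

theory Submission
  imports Defs
begin

text \<open>Under the action costs \<open>k\<close> every application of \<open>\<bbbB>\<close> lowers the maximum of a vector by at
  least \<open>C\<close>, so the iterates of any \<open>v\<close> eventually fall below \<open>v\<close> itself and (H4) holds.
  At \<open>v\<^sup>0 = 0\<close> the first improvement step compares, in state \<open>r\<close>, stopping (worth at most
  \<open>-C\<close>, attained only by jumping to \<open>r\<close> itself) with continuing (worth \<open>c\<^sub>r < -C\<close>); it therefore
  stops and jumps to \<open>r\<close>, which makes row \<open>r\<close> of \<open>A(P\<^sup>1) = I - B(z\<^sup>1)\<close> vanish.\<close>

definition basis_choices :: "nat \<Rightarrow> nat \<Rightarrow> (nat \<Rightarrow> real) set" where
  "basis_choices M = (\<lambda>i. {basis_vec j | j. j < M})"

definition distance_cost :: "nat \<Rightarrow> real \<Rightarrow> nat \<Rightarrow> (nat \<Rightarrow> real) \<Rightarrow> real" where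
  "distance_cost M C = (\<lambda>i zi. - C - (\<Sum>j<M. zi j * \<bar>real i - real j\<bar>))"

lemma sum_basis_vec_mult:
  fixes f :: "nat \<Rightarrow> real"
  assumes "j < M"
  shows "(\<Sum>l<M. basis_vec j l * f l) = f j"
proof -
  have "(\<Sum>l<M. basis_vec j l * f l) = (\<Sum>l<M. if l = j then f l else 0)"
    by (rule sum.cong) (auto simp: basis_vec_def)
  also have "\<dots> = f j"
    using assms by (simp add: sum.delta')
  finally show ?thesis .
qed

lemma distance_cost_basis_vec:
  "j < M \<Longrightarrow> distance_cost M C i (basis_vec j) = - C - \<bar>real i - real j\<bar>"
  by (simp add: distance_cost_def sum_basis_vec_mult)

lemma Bop_basis_choices_le:
  assumes "i < M" and "\<forall>j<M. x j \<le> b"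
  shows "Bop M (basis_choices M) (distance_cost M C) x i \<le> b - C"
  unfolding Bop_def
proof (rule cSUP_least)
  show "basis_choices M i \<noteq> {}"
    using assms(1) by (auto simp: basis_choices_def)
next
  fix zi assume "zi \<in> basis_choices M i"
  then obtain j where "j < M" "zi = basis_vec j"
    by (auto simp: basis_choices_def)
  moreover have "x j - \<bar>real i - real j\<bar> \<le> b"
    using \<open>j < M\<close> assms(2) by (smt (verit) abs_ge_zero)
  ultimately show "(\<Sum>l<M. zi l * x l) + distance_cost M C i zi \<le> b - C"
    by (simp add: sum_basis_vec_mult distance_cost_basis_vec)
qed

lemma Bop_basis_choices_iterate_le:
  assumes "j < M"
  shows "(Bop M (basis_choices M) (distance_cost M C) ^^ n) v j \<le> Max (v ` {..<M}) - real n * C"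
  using assms
proof (induction n arbitrary: j)
  case 0
  then show ?case by simp
next
  case (Suc n)
  have "(Bop M (basis_choices M) (distance_cost M C) ^^ Suc n) v j
      \<le> (Max (v ` {..<M}) - real n * C) - C"
    using Suc by (simp add: Bop_basis_choices_le)
  then show ?case by (simp add: algebra_simps)
qed

lemma H4_basis_choices_distance_cost:
  assumes "C > 0"
  shows "H4 M \<rho> \<delta> W (basis_choices M) D c (distance_cost M C)"
  unfolding H4_def
proof (intro allI impI)
  fix v :: "nat \<Rightarrow> real" and i assume i: "i < M"
  let ?B = "Bop M (basis_choices M) (distance_cost M C)"
  obtain n :: nat where n: "Max (v ` {..<M}) - v i < real n * C"
    using reals_Archimedean3[OF assms] by blast
  have "v i \<le> Max (v ` {..<M})"
    using i by simp
  then have "n > 0"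
    using n by (cases n) auto
  moreover have "(?B ^^ n) v i < (?B ^^ 0) v i"
    using Bop_basis_choices_iterate_le[OF i, where C = C and n = n and v = v] n by simp
  ultimately show "\<exists>n m. n < m \<and> (?B ^^ m) v i < (?B ^^ n) v i"
    by blast
qed

lemma Fval_zero_vec:
  "Fval M \<rho> \<delta> c k (w, z, \<psi>) (\<lambda>_. 0) i = (1 - \<psi> i) * c i (w i) + \<delta> * \<psi> i * k i (z i)"
  by (simp add: Fval_def bvec_def)

lemma pi_choice_zero_stops_at_state:
  assumes choice: "pi_choice M \<rho> 1 W (basis_choices M) D c (distance_cost M C) (\<lambda>_. 0) (w, z, \<psi>)"
    and r: "r < M" "1 \<in> D r" "D r \<subseteq> {0, 1}" "\<forall>wr\<in>W r. c r wr < - C"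
  shows "z r = basis_vec r \<and> \<psi> r = 1"
proof -
  have pol: "\<forall>i<M. w i \<in> W i \<and> z i \<in> basis_choices M i \<and> \<psi> i \<in> D i"
    using choice by (simp add: pi_choice_def policies_def)
  let ?stop = "(w, z(r := basis_vec r), \<psi>(r := 1))"
  have "?stop \<in> policies M W (basis_choices M) D"
    using pol r(1,2) by (auto simp: policies_def basis_choices_def)
  then have "Fval M \<rho> 1 c (distance_cost M C) ?stop (\<lambda>_. 0) r
      \<le> Fval M \<rho> 1 c (distance_cost M C) (w, z, \<psi>) (\<lambda>_. 0) r"
    using choice r(1) by (simp add: pi_choice_def)
  then have opt: "- C \<le> (1 - \<psi> r) * c r (w r) + \<psi> r * distance_cost M C r (z r)"
    using r(1) by (simp add: Fval_zero_vec distance_cost_basis_vec)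
  obtain j where j: "j < M" "z r = basis_vec j"
    using pol r(1) by (auto simp: basis_choices_def)
  have "c r (w r) < - C"
    using pol r(1,4) by blast
  moreover have "\<psi> r = 0 \<or> \<psi> r = 1"
    using pol r(1,3) by blast
  ultimately have \<psi>: "\<psi> r = 1"
    using opt by auto
  with opt j have "\<bar>real r - real j\<bar> \<le> 0"
    by (simp add: distance_cost_basis_vec)
  with j \<psi> show ?thesis
    by simp
qed

lemma Amat_row_zero_if_stop_at_state:
  "\<psi> r = 1 \<Longrightarrow> z r = basis_vec r \<Longrightarrow> Amat \<rho> \<delta> (w, z, \<psi>) r j = 0"
  by (simp add: Amat_def basis_vec_def)

lemma det_zero_row:
  fixes A :: "'a :: comm_ring_1 mat"
  assumes "A \<in> carrier_mat n n" "r < n" "\<forall>j<n. A $$ (r, j) = 0"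
  shows "det A = 0"
proof -
  have "A = mat\<^sub>r n n (\<lambda>i. if i = r then 0\<^sub>v n else row A i)"
    using assms by (intro eq_matI) auto
  then show ?thesis
    using det_row_0[OF assms(2), of "row A"] assms(1) by simp
qed

theorem mainTheorem9:
  fixes M r :: nat and \<rho> C :: real
    and W :: "nat \<Rightarrow> (nat \<Rightarrow> real) set" and D :: "nat \<Rightarrow> real set"
    and c :: "nat \<Rightarrow> (nat \<Rightarrow> real) \<Rightarrow> real"
    and Z :: "nat \<Rightarrow> (nat \<Rightarrow> real) set" and k :: "nat \<Rightarrow> (nat \<Rightarrow> real) \<Rightarrow> real"
  assumes "\<rho> > 0" and "C > 0"
    and "\<forall>i<M. W i \<noteq> {} \<and> (\<forall>p\<in>W i. prob_vec M p)"
    and "\<forall>i<M. D i \<noteq> {} \<and> D i \<subseteq> {0, 1}"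
    and "Z = (\<lambda>i. {basis_vec j | j. j < M})"
    and "k = (\<lambda>i zi. - C - (\<Sum>j<M. zi j * \<bar>real i - real j\<bar>))"
  shows "H4 M \<rho> 1 W Z D c k \<and>
    ((r < M \<and> 1 \<in> D r \<and> (\<forall>wr\<in>W r. c r wr < - C)) \<longrightarrow>
      (\<forall>w z \<psi>. pi_choice M \<rho> 1 W Z D c k (\<lambda>_. 0) (w, z, \<psi>) \<longrightarrow>
         z r = basis_vec r \<and> \<psi> r = 1 \<and> (\<forall>j<M. Amat \<rho> 1 (w, z, \<psi>) r j = 0) \<and>
         det (Amatrix M \<rho> 1 (w, z, \<psi>)) = 0))"
proof -
  have Z: "Z = basis_choices M" and k: "k = distance_cost M C"
    using assms(5,6) by (simp_all add: basis_choices_def distance_cost_def)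
  show ?thesis
    unfolding Z k
  proof (intro conjI impI allI H4_basis_choices_distance_cost[OF assms(2)])
    fix w z \<psi>
    assume "r < M \<and> 1 \<in> D r \<and> (\<forall>wr\<in>W r. c r wr < - C)"
      and "pi_choice M \<rho> 1 W (basis_choices M) D c (distance_cost M C) (\<lambda>_. 0) (w, z, \<psi>)"
    with assms(4) have stop: "z r = basis_vec r" "\<psi> r = 1" and r: "r < M"
      using pi_choice_zero_stops_at_state by blast+
    then show "z r = basis_vec r" "\<psi> r = 1"
      by simp_all
    show row: "Amat \<rho> 1 (w, z, \<psi>) r j = 0" for j
      using stop by (intro Amat_row_zero_if_stop_at_state)
    show "det (Amatrix M \<rho> 1 (w, z, \<psi>)) = 0"
      using row r by (intro det_zero_row[of _ M r]) (auto simp: Amatrix_def)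
  qed
qed

end
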